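(* Let $G$ be a locally compact group, let $G_e$ be the connected component of the identity, and let $q_e:G\to G/G_e$ be the quotient map (with $G/G_e$ carrying the quotient topology). For $\tau\in\mathcal{T}_{td}(G)$ we have $G_e\subseteq\ker\eta_\tau$, so there is a unique continuous homomorphism $\tilde{\eta}_\tau:G/G_e\to G_\tau$ with $\tilde{\eta}_\tau\circ q_e=\eta_\tau$; let $\tilde{\tau}$ be the coarsest topology on $G/G_e$ making $\tilde{\eta}_\tau$ continuous. Then $\tilde{\tau}\in\mathcal{T}_{td}(G/G_e)$, the map $\tau\mapsto\tilde{\tau}:\mathcal{T}_{td}(G)\to\mathcal{T}_{td}(G/G_e)$ is a semilattice isomorphism (with respect to the operations $\vee$), and $G_\tau=(G/G_e)_{\tilde{\tau}}$ for each $\tau\in\mathcal{T}_{td}(G)$.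
   Context: For a locally compact group $G$ with topology $\tau_G$, $\mathcal{T}(G)$ denotes the set of group topologies $\tau\subseteq\tau_G$ on $G$ (not necessarily Hausdorff) whose completion $G_\tau$ is locally compact; $\eta_\tau:G\to G_\tau$ denotes the natural continuous homomorphism with dense range, and $\tau$ is the topology induced by $\eta_\tau$. For $\tau_1,\tau_2\in\mathcal{T}(G)$, $\tau_1\vee\tau_2$ is the coarsest topology on $G$ making $s\mapsto(\eta_{\tau_1}(s),\eta_{\tau_2}(s)):G\to G_{\tau_1}\times G_{\tau_2}$ continuous; $G_{\tau_1\vee\tau_2}$ is the closure of the image of this map, and $\mathcal{T}(G)$ is a semilattice under $\vee$. $\mathcal{T}_{td}(G)=\{\tau\in\mathcal{T}(G): G_\tau \text{ is totally disconnected}\}$, a subsemilattice of $\mathcal{T}(G)$. *)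

theory Defs
  imports "HOL-Analysis.Analysis" "HOL-Algebra.Coset"
begin

definition topological_group :: "('a, 'm) monoid_scheme \<Rightarrow> 'a topology \<Rightarrow> bool" where
  "topological_group G T \<longleftrightarrow> group G \<and> topspace T = carrier G \<and>
     continuous_map (prod_topology T T) T (\<lambda>p. fst p \<otimes>\<^bsub>G\<^esub> snd p) \<and>
     continuous_map T T (\<lambda>x. inv\<^bsub>G\<^esub> x)"

definition lc_group :: "('a, 'm) monoid_scheme \<Rightarrow> 'a topology \<Rightarrow> bool" where
  "lc_group G T \<longleftrightarrow> topological_group G T \<and> Hausdorff_space T \<and> locally_compact_space T"

definition totally_disconnected_space :: "'a topology \<Rightarrow> bool" where
  "totally_disconnected_space X \<longleftrightarrow> (\<forall>x\<in>topspace X. connected_component_of_set X x = {x})"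

definition coarser_group_topology :: "('a, 'm) monoid_scheme \<Rightarrow> 'a topology \<Rightarrow> 'a topology \<Rightarrow> bool" where
  "coarser_group_topology G T \<tau> \<longleftrightarrow> topological_group G \<tau> \<and> (\<forall>U. openin \<tau> U \<longrightarrow> openin T U)"

text \<open>(H, sigma, eta) is a locally compact completion of (G, tau): H is a locally compact
  (hence complete) group, eta a continuous homomorphism with dense range, and tau is
  the topology induced by eta.\<close>
definition lc_completion ::
  "('a, 'm) monoid_scheme \<Rightarrow> 'a topology \<Rightarrow> ('b, 'n) monoid_scheme \<Rightarrow> 'b topology \<Rightarrow> ('a \<Rightarrow> 'b) \<Rightarrow> bool" where
  "lc_completion G \<tau> H \<sigma> \<eta> \<longleftrightarrow> lc_group H \<sigma> \<and> \<eta> \<in> hom G H \<and> continuous_map \<tau> \<sigma> \<eta> \<and>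
     \<sigma> closure_of (\<eta> ` carrier G) = carrier H \<and> \<tau> = pullback_topology (carrier G) \<eta> \<sigma>"

text \<open>Any Hausdorff completion of (G,tau) injects into the type of sets of
  subsets of G (points correspond to traces of neighbourhood filters), so it suffices to look
  for completions on the type 'a set set.\<close>
definition T_set :: "('a, 'm) monoid_scheme \<Rightarrow> 'a topology \<Rightarrow> 'a topology set" where
  "T_set G T = {\<tau>. coarser_group_topology G T \<tau> \<and>
     (\<exists>(H :: 'a set set monoid) \<sigma> \<eta>. lc_completion G \<tau> H \<sigma> \<eta>)}"

definition T_td :: "('a, 'm) monoid_scheme \<Rightarrow> 'a topology \<Rightarrow> 'a topology set" where
  "T_td G T = {\<tau> \<in> T_set G T.
     \<exists>(H :: 'a set set monoid) \<sigma> \<eta>. lc_completion G \<tau> H \<sigma> \<eta> \<and> totally_disconnected_space \<sigma>}"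

definition completion_of ::
  "('a, 'm) monoid_scheme \<Rightarrow> 'a topology \<Rightarrow> 'a set set monoid \<times> 'a set set topology \<times> ('a \<Rightarrow> 'a set set)" where
  "completion_of G \<tau> = (SOME (H, \<sigma>, \<eta>). lc_completion G \<tau> H \<sigma> \<eta>)"

definition tjoin :: "('a, 'm) monoid_scheme \<Rightarrow> 'a topology \<Rightarrow> 'a topology \<Rightarrow> 'a topology" where
  "tjoin G \<tau>1 \<tau>2 =
     (case completion_of G \<tau>1 of (H1, \<sigma>1, \<eta>1) \<Rightarrow>
      case completion_of G \<tau>2 of (H2, \<sigma>2, \<eta>2) \<Rightarrow>
        pullback_topology (carrier G) (\<lambda>s. (\<eta>1 s, \<eta>2 s)) (prod_topology \<sigma>1 \<sigma>2))"

definition quotient_topology :: "'a topology \<Rightarrow> ('a \<Rightarrow> 'b) \<Rightarrow> 'b set \<Rightarrow> 'b topology" where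
  "quotient_topology X q B = topology (\<lambda>V. V \<subseteq> B \<and> openin X {x \<in> topspace X. q x \<in> V})"

end

(* A totally disconnected completion eta of tau kills the identity component G_e: eta maps the
   connected set G_e into the component of the identity, which is trivial, and since all
   completions of tau induce tau, every other completion identifies the same points. So every
   completion of tau factors through q_e and is a completion of the quotient topology of tau,
   while tau is the pullback of that quotient topology along q_e. Quotient and pullback along
   the surjective homomorphism q_e are therefore mutually inverse between T_td(G) and
   T_td(G/G_e), and they commute with joins because a join is the pullback along the pair of
   completion maps, whichever completions are chosen. *)

theory Submission
  imports Defs "HOL-Algebra.Weak_Morphisms"
begin

section \<open>Pullback and quotient topologies\<close>

lemma topology_eq_continuous_id:
  assumes "continuous_map X Y id" "continuous_map Y X id"
  shows "X = Y"
  using assms homeomorphic_maps_id[of Y X] by (auto simp: homeomorphic_maps_def)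

lemma continuous_map_pullback_topology: "continuous_map (pullback_topology A f X) X f"
  using continuous_map_pullback[OF continuous_map_id, of A f X] by simp

lemma continuous_map_into_pullback_topology_iff:
  "continuous_map Z (pullback_topology A f X) g \<longleftrightarrow>
     g \<in> topspace Z \<rightarrow> A \<and> continuous_map Z X (f \<circ> g)"
proof
  assume g: "continuous_map Z (pullback_topology A f X) g"
  then have "continuous_map Z X (f \<circ> g)"
    by (rule continuous_map_compose[OF _ continuous_map_pullback_topology])
  moreover have "g \<in> topspace Z \<rightarrow> A"
    using g by (auto simp: continuous_map_def topspace_pullback_topology)
  ultimately show "g \<in> topspace Z \<rightarrow> A \<and> continuous_map Z X (f \<circ> g)"
    by blast
next
  assume "g \<in> topspace Z \<rightarrow> A \<and> continuous_map Z X (f \<circ> g)"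
  then show "continuous_map Z (pullback_topology A f X) g"
    by (auto intro: continuous_map_pullback')
qed

lemma pullback_topology_cong:
  assumes "\<And>x. x \<in> A \<Longrightarrow> f x = g x"
  shows "pullback_topology A f X = pullback_topology A g X"
proof -
  have "f -` U \<inter> A = g -` U \<inter> A" for U
    using assms by auto
  then show ?thesis
    unfolding topology_eq openin_pullback_topology by auto
qed

lemma pullback_topology_compose:
  assumes "h ` A \<subseteq> B"
  shows "pullback_topology A h (pullback_topology B k X) = pullback_topology A (k \<circ> h) X"
proof (rule topology_eq_continuous_id)
  show "continuous_map (pullback_topology A h (pullback_topology B k X)) (pullback_topology A (k \<circ> h) X) id"
    using continuous_map_compose[OF continuous_map_pullback_topology continuous_map_pullback_topology]
    by (simp add: continuous_map_into_pullback_topology_iff topspace_pullback_topology)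
  show "continuous_map (pullback_topology A (k \<circ> h) X) (pullback_topology A h (pullback_topology B k X)) id"
    using assms continuous_map_pullback_topology[of A "k \<circ> h" X]
    by (auto simp: continuous_map_into_pullback_topology_iff topspace_pullback_topology)
qed

lemma pullback_topology_homeomorphic:
  assumes hom: "homeomorphic_maps X Y f g" and h: "h ` A \<subseteq> topspace X"
  shows "pullback_topology A (f \<circ> h) Y = pullback_topology A h X"
proof (rule topology_eq_continuous_id)
  have f: "continuous_map X Y f" and g: "continuous_map Y X g"
    and gf: "\<And>x. x \<in> topspace X \<Longrightarrow> g (f x) = x"
    using hom by (auto simp: homeomorphic_maps_def)
  have "continuous_map (pullback_topology A (f \<circ> h) Y) X (g \<circ> (f \<circ> h))"
    by (rule continuous_map_compose[OF continuous_map_pullback_topology g])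
  then have "continuous_map (pullback_topology A (f \<circ> h) Y) X h"
    by (rule continuous_map_eq) (use h gf in \<open>auto simp: topspace_pullback_topology\<close>)
  then show "continuous_map (pullback_topology A (f \<circ> h) Y) (pullback_topology A h X) id"
    by (simp add: continuous_map_into_pullback_topology_iff topspace_pullback_topology)
  show "continuous_map (pullback_topology A h X) (pullback_topology A (f \<circ> h) Y) id"
    using continuous_map_compose[OF continuous_map_pullback_topology f]
    by (simp add: continuous_map_into_pullback_topology_iff topspace_pullback_topology)
qed

lemma continuous_map_into_pullback_topology_pair:
  "continuous_map Z (pullback_topology A (\<lambda>s. (f1 s, f2 s)) (prod_topology X1 X2)) g \<longleftrightarrow>
     continuous_map Z (pullback_topology A f1 X1) g \<and> continuous_map Z (pullback_topology A f2 X2) g"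
  by (auto simp: continuous_map_into_pullback_topology_iff continuous_map_paired o_def)

lemma pullback_topology_pair_cong:
  assumes "pullback_topology A f1 X1 = pullback_topology A g1 Y1"
    and "pullback_topology A f2 X2 = pullback_topology A g2 Y2"
  shows "pullback_topology A (\<lambda>s. (f1 s, f2 s)) (prod_topology X1 X2) =
         pullback_topology A (\<lambda>s. (g1 s, g2 s)) (prod_topology Y1 Y2)"
    (is "?L = ?R")
proof (rule topology_eq_continuous_id)
  show "continuous_map ?L ?R id"
    using continuous_map_id[of ?L]
    unfolding continuous_map_into_pullback_topology_pair assms .
  show "continuous_map ?R ?L id"
    using continuous_map_id[of ?R]
    unfolding continuous_map_into_pullback_topology_pair assms .
qed

lemma pullback_topology_eq_fibres:
  assumes eq: "pullback_topology A f X = pullback_topology A g Y" and t1: "t1_space Y"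
    and x: "x \<in> A" and y: "y \<in> A" and gx: "g x \<in> topspace Y" and gy: "g y \<in> topspace Y"
    and fxy: "f x = f y"
  shows "g x = g y"
proof (rule ccontr)
  assume "g x \<noteq> g y"
  then obtain U where U: "openin Y U" "g x \<in> U" "g y \<notin> U"
    using t1 gx gy unfolding t1_space_def by blast
  then have "openin (pullback_topology A g Y) (g -` U \<inter> A)"
    unfolding openin_pullback_topology by blast
  then obtain W where W: "g -` U \<inter> A = f -` W \<inter> A"
    unfolding eq[symmetric] openin_pullback_topology by blast
  have "x \<in> f -` W \<inter> A"
    unfolding W[symmetric] using U(2) x by simp
  then have "y \<in> g -` U \<inter> A"
    unfolding W using fxy y by simp
  then show False
    using U(3) by simp
qed

lemma openin_quotient_topology:
  "openin (quotient_topology X q B) V \<longleftrightarrow> V \<subseteq> B \<and> openin X {x \<in> topspace X. q x \<in> V}"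
proof -
  have "{x \<in> topspace X. q x \<in> S \<inter> S'} = {x \<in> topspace X. q x \<in> S} \<inter> {x \<in> topspace X. q x \<in> S'}"
    for S S'
    by auto
  moreover have "{x \<in> topspace X. q x \<in> \<Union>K} = (\<Union>S\<in>K. {x \<in> topspace X. q x \<in> S})" for K
    by auto
  ultimately have "istopology (\<lambda>V. V \<subseteq> B \<and> openin X {x \<in> topspace X. q x \<in> V})"
    unfolding istopology_def by auto
  then show ?thesis
    unfolding quotient_topology_def by simp
qed

lemma topspace_quotient_topology:
  assumes "q \<in> topspace X \<rightarrow> B"
  shows "topspace (quotient_topology X q B) = B"
proof -
  have "{x \<in> topspace X. q x \<in> B} = topspace X"
    using assms by auto
  then have "B \<subseteq> topspace (quotient_topology X q B)"
    by (intro openin_subset) (simp add: openin_quotient_topology)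
  moreover have "topspace (quotient_topology X q B) \<subseteq> B"
    using openin_topspace openin_quotient_topology by metis
  ultimately show ?thesis
    by blast
qed

lemma continuous_map_from_quotient_topology:
  assumes "continuous_map X Y (g \<circ> q)" "q \<in> topspace X \<rightarrow> B" "g \<in> B \<rightarrow> topspace Y"
  shows "continuous_map (quotient_topology X q B) Y g"
  unfolding continuous_map_def topspace_quotient_topology[OF assms(2)]
proof (intro conjI allI impI)
  fix U assume "openin Y U"
  then have "openin X {x \<in> topspace X. g (q x) \<in> U}"
    using assms(1) by (simp add: continuous_map_def)
  moreover have "{x \<in> topspace X. q x \<in> {y \<in> B. g y \<in> U}} = {x \<in> topspace X. g (q x) \<in> U}"
    using assms(2) by auto
  ultimately show "openin (quotient_topology X q B) {y \<in> B. g y \<in> U}"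
    by (simp add: openin_quotient_topology)
qed (use assms(3) in simp)

lemma quotient_topology_mono:
  assumes "\<And>U. openin X U \<Longrightarrow> openin X' U" "topspace X = topspace X'"
    and "openin (quotient_topology X q B) V"
  shows "openin (quotient_topology X' q B) V"
  using assms by (simp add: openin_quotient_topology)

lemma quotient_topology_pullback_topology:
  assumes "q ` A = B" "topspace X = B"
  shows "quotient_topology (pullback_topology A q X) q B = X"
proof -
  have ts: "topspace (pullback_topology A q X) = A"
    using assms by (auto simp: topspace_pullback_topology)
  have preimage_inj: "V = W" if "V \<subseteq> B" "W \<subseteq> B" "q -` V \<inter> A = q -` W \<inter> A" for V W
    using that assms(1) by blast
  show ?thesis
    unfolding topology_eq openin_quotient_topology ts openin_pullback_topology
  proof (intro allI iffI)
    fix V assume "V \<subseteq> B \<and> (\<exists>U. openin X U \<and> {x \<in> A. q x \<in> V} = q -` U \<inter> A)"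
    then obtain U where "V \<subseteq> B" "openin X U" "q -` V \<inter> A = q -` U \<inter> A"
      by (auto simp: vimage_def Int_def)
    moreover have "U \<subseteq> B"
      using \<open>openin X U\<close> openin_subset assms(2) by blast
    ultimately show "openin X V"
      using preimage_inj by metis
  next
    fix V assume "openin X V"
    then show "V \<subseteq> B \<and> (\<exists>U. openin X U \<and> {x \<in> A. q x \<in> V} = q -` U \<inter> A)"
      using openin_subset assms(2) by blast
  qed
qed

lemma homeomorphic_totally_disconnected_space:
  assumes "X homeomorphic_space Y"
  shows "totally_disconnected_space X \<longleftrightarrow> totally_disconnected_space Y"
proof -
  have "totally_disconnected_space Y" if td: "totally_disconnected_space X"
    and hom: "homeomorphic_maps X Y f g" for X :: "'p topology" and Y :: "'q topology" and f g
  proof -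
    have f: "homeomorphic_map X Y f"
      using hom homeomorphic_maps_imp_map by blast
    have "connected_component_of_set Y y = {y}" if y: "y \<in> topspace Y" for y
    proof -
      have "g y \<in> topspace X" "f (g y) = y"
        using hom y by (auto simp: homeomorphic_maps_def continuous_map_def)
      then show ?thesis
        using homeomorphic_map_connected_component_of[OF f] td
        by (metis image_empty image_insert totally_disconnected_space_def)
    qed
    then show ?thesis
      by (simp add: totally_disconnected_space_def)
  qed
  then show ?thesis
    using assms homeomorphic_maps_sym by (metis homeomorphic_space_def)
qed

section \<open>Groups and topological groups\<close>

lemma hom_factor_surj:
  assumes q: "q \<in> hom G Q" "q ` carrier G = carrier Q" and h: "h \<in> hom G H"
    and h': "\<And>x. x \<in> carrier G \<Longrightarrow> h' (q x) = h x" and G: "group G"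
  shows "h' \<in> hom Q H"
proof (rule homI)
  fix X assume "X \<in> carrier Q"
  then obtain x where "x \<in> carrier G" "X = q x"
    using q(2) by blast
  then show "h' X \<in> carrier H"
    using h h' by (auto simp: hom_def)
next
  fix X Y assume "X \<in> carrier Q" "Y \<in> carrier Q"
  then obtain x y where xy: "x \<in> carrier G" "y \<in> carrier G" "X = q x" "Y = q y"
    using q(2) by blast
  then show "h' (X \<otimes>\<^bsub>Q\<^esub> Y) = h' X \<otimes>\<^bsub>H\<^esub> h' Y"
    using hom_mult[OF q(1)] hom_mult[OF h] h' group.subgroup_self[OF G] subgroup.m_closed by metis
qed

lemma the_elem_image_r_coset:
  assumes "N \<lhd> G" "group H" "h \<in> hom G H" "N \<subseteq> kernel G H h" "x \<in> carrier G"
  shows "the_elem (h ` (N #>\<^bsub>G\<^esub> x)) = h x"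
proof -
  interpret N: normal N G by (rule assms(1))
  interpret h: group_hom G H h
    using assms by (simp add: group_hom_def group_hom_axioms_def)
  have "h ` (N #>\<^bsub>G\<^esub> x) = {h x}"
    using assms N.rcos_self[OF assms(5) N.subgroup_axioms] N.subset
    by (auto simp: r_coset_def kernel_def)
  then show ?thesis
    by simp
qed

lemma the_elem_image_hom_Mod:
  assumes "N \<lhd> G" "group H" "h \<in> hom G H" "N \<subseteq> kernel G H h"
  shows "(\<lambda>X. the_elem (h ` X)) \<in> hom (G Mod N) H"
  using assms normal.r_coset_hom_Mod[OF assms(1)] carrier_FactGroup[of G N]
    the_elem_image_r_coset[OF assms] normal.axioms(2)[OF assms(1)]
  by (intro hom_factor_surj[where q = "\<lambda>x. N #>\<^bsub>G\<^esub> x"]) auto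

lemma topological_group_translations:
  assumes "topological_group G T" "a \<in> carrier G"
  shows "continuous_map T T (\<lambda>y. a \<otimes>\<^bsub>G\<^esub> y)" "continuous_map T T (\<lambda>y. y \<otimes>\<^bsub>G\<^esub> a)"
proof -
  have ts: "topspace T = carrier G"
    and m: "continuous_map (prod_topology T T) T (\<lambda>p. fst p \<otimes>\<^bsub>G\<^esub> snd p)"
    using assms by (auto simp: topological_group_def)
  have "continuous_map T (prod_topology T T) (\<lambda>y. (a, y))"
    "continuous_map T (prod_topology T T) (\<lambda>y. (y, a))"
    using assms(2) ts by (auto simp: continuous_map_paired)
  then show "continuous_map T T (\<lambda>y. a \<otimes>\<^bsub>G\<^esub> y)" "continuous_map T T (\<lambda>y. y \<otimes>\<^bsub>G\<^esub> a)"
    using continuous_map_compose[OF _ m, of T "\<lambda>y. (a, y)"] continuous_map_compose[OF _ m, of T "\<lambda>y. (y, a)"]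
    by (simp_all add: o_def)
qed

lemma continuous_map_pair_map:
  assumes "continuous_map X Y f"
  shows "continuous_map (prod_topology X X) (prod_topology Y Y) (\<lambda>p. (f (fst p), f (snd p)))"
  using assms continuous_map_of_fst[of X X Y f] continuous_map_of_snd[of X X Y f]
  by (simp add: continuous_map_paired o_def)

lemma topological_group_pullback_topology:
  assumes G: "group G" and H: "topological_group H \<sigma>" and \<eta>: "\<eta> \<in> hom G H"
  shows "topological_group G (pullback_topology (carrier G) \<eta> \<sigma>)"
proof -
  interpret \<eta>: group_hom G H \<eta>
    using assms by (simp add: group_hom_def group_hom_axioms_def topological_group_def)
  define \<tau> where "\<tau> = pullback_topology (carrier G) \<eta> \<sigma>"
  have ts: "topspace \<tau> = carrier G"
    using H by (auto simp: \<tau>_def topspace_pullback_topology topological_group_def)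
  have \<eta>_cont: "continuous_map \<tau> \<sigma> \<eta>"
    unfolding \<tau>_def by (rule continuous_map_pullback_topology)
  have "continuous_map (prod_topology \<tau> \<tau>) \<sigma> ((\<lambda>p. fst p \<otimes>\<^bsub>H\<^esub> snd p) \<circ> (\<lambda>p. (\<eta> (fst p), \<eta> (snd p))))"
    using H by (intro continuous_map_compose[OF continuous_map_pair_map[OF \<eta>_cont]])
      (simp add: topological_group_def)
  then have "continuous_map (prod_topology \<tau> \<tau>) \<sigma> (\<eta> \<circ> (\<lambda>p. fst p \<otimes>\<^bsub>G\<^esub> snd p))"
    by (rule continuous_map_eq) (auto simp: ts)
  then have mult: "continuous_map (prod_topology \<tau> \<tau>) \<tau> (\<lambda>p. fst p \<otimes>\<^bsub>G\<^esub> snd p)"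
    unfolding \<tau>_def by (rule continuous_map_pullback') (auto simp: \<tau>_def[symmetric] ts)
  have "continuous_map \<tau> \<sigma> ((\<lambda>x. inv\<^bsub>H\<^esub> x) \<circ> \<eta>)"
    using H \<eta>_cont by (auto simp: topological_group_def intro: continuous_map_compose)
  then have "continuous_map \<tau> \<sigma> (\<eta> \<circ> (\<lambda>x. inv\<^bsub>G\<^esub> x))"
    by (rule continuous_map_eq) (auto simp: ts)
  then have inv: "continuous_map \<tau> \<tau> (\<lambda>x. inv\<^bsub>G\<^esub> x)"
    unfolding \<tau>_def by (rule continuous_map_pullback') (auto simp: \<tau>_def[symmetric] ts)
  show ?thesis
    using G ts mult inv by (simp add: topological_group_def \<tau>_def)
qed

lemma normal_connected_component_one:
  fixes G (structure)
  assumes tg: "topological_group G T"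
  shows "connected_component_of_set T \<one>\<^bsub>G\<^esub> \<lhd> G"
proof -
  define C where "C = connected_component_of_set T \<one>\<^bsub>G\<^esub>"
  interpret group G
    using tg by (simp add: topological_group_def)
  have ts: "topspace T = carrier G" and inv_cont: "continuous_map T T (\<lambda>x. inv x)"
    using tg by (auto simp: topological_group_def)
  have one: "\<one> \<in> C" and sub: "C \<subseteq> carrier G" and conn: "connectedin T C"
    using ts connected_component_of_subset_topspace[of T "\<one>"]
    by (auto simp: C_def connected_component_of_refl connectedin_connected_component_of)
  have invariant: "k ` C \<subseteq> C" if "continuous_map T T k" "k \<one> = \<one>" for k
    using connectedin_continuous_map_image[OF that(1) conn] one that(2)
    unfolding C_def by (metis connected_component_of_maximal imageI)
  have mult: "a \<otimes> b \<in> C" if a: "a \<in> C" and b: "b \<in> C" for a b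
  proof -
    have "connectedin T ((\<lambda>y. a \<otimes> y) ` C)"
      using a sub by (intro connectedin_continuous_map_image[OF topological_group_translations(1)[OF tg] conn])
        auto
    moreover have "a \<in> (\<lambda>y. a \<otimes> y) ` C"
      using one a sub by (metis r_one imageI subsetD)
    ultimately have "connectedin T (C \<union> (\<lambda>y. a \<otimes> y) ` C)"
      using a conn by (intro connectedin_Un) auto
    then have "C \<union> (\<lambda>y. a \<otimes> y) ` C \<subseteq> C"
      unfolding C_def by (rule connected_component_of_maximal) (use one in \<open>auto simp: C_def\<close>)
    then show ?thesis
      using b by auto
  qed
  have "subgroup C G"
    using sub one mult invariant[OF inv_cont] by (intro subgroupI) auto
  moreover have "x \<otimes> h \<otimes> inv x \<in> C" if x: "x \<in> carrier G" and h: "h \<in> C" for x h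
  proof -
    have "continuous_map T T ((\<lambda>y. y \<otimes> inv x) \<circ> (\<lambda>y. x \<otimes> y))"
      using topological_group_translations[OF tg] x by (meson inv_closed continuous_map_compose)
    then show ?thesis
      using invariant h x by force
  qed
  ultimately show ?thesis
    unfolding C_def[symmetric] using normal_inv_iff by blast
qed

lemma lc_group_iso_homeomorphic:
  assumes H: "lc_group H \<sigma>" and H': "group H'" and iso: "f \<in> iso H H'"
    and hom: "homeomorphic_maps \<sigma> \<sigma>' f g"
  shows "lc_group H' \<sigma>'"
proof -
  interpret f: group_hom H H' f
    using H H' iso by (simp add: group_hom_def group_hom_axioms_def lc_group_def
        topological_group_def iso_def)
  have tsH: "topspace \<sigma> = carrier H"
    and mult: "continuous_map (prod_topology \<sigma> \<sigma>) \<sigma> (\<lambda>p. fst p \<otimes>\<^bsub>H\<^esub> snd p)"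
    and inv: "continuous_map \<sigma> \<sigma> (\<lambda>x. inv\<^bsub>H\<^esub> x)"
    using H by (auto simp: lc_group_def topological_group_def)
  have f: "continuous_map \<sigma> \<sigma>' f" and g: "continuous_map \<sigma>' \<sigma> g"
    and fg: "\<And>y. y \<in> topspace \<sigma>' \<Longrightarrow> f (g y) = y"
    using hom by (auto simp: homeomorphic_maps_def)
  have ts: "topspace \<sigma>' = carrier H'"
    using homeomorphic_imp_surjective_map[OF homeomorphic_maps_imp_map[OF hom]] iso tsH
    by (simp add: iso_def bij_betw_def)
  have g_in: "g y \<in> carrier H" if "y \<in> carrier H'" for y
    using g that ts tsH by (auto simp: continuous_map_def)
  have "continuous_map (prod_topology \<sigma>' \<sigma>') \<sigma>' (f \<circ> (\<lambda>p. fst p \<otimes>\<^bsub>H\<^esub> snd p) \<circ> (\<lambda>p. (g (fst p), g (snd p))))"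
    by (rule continuous_map_compose[OF continuous_map_pair_map[OF g] continuous_map_compose[OF mult f]])
  then have mult': "continuous_map (prod_topology \<sigma>' \<sigma>') \<sigma>' (\<lambda>p. fst p \<otimes>\<^bsub>H'\<^esub> snd p)"
    by (rule continuous_map_eq) (auto simp: ts g_in fg)
  have "continuous_map \<sigma>' \<sigma>' (f \<circ> (\<lambda>x. inv\<^bsub>H\<^esub> x) \<circ> g)"
    using f g inv by (intro continuous_map_compose)
  then have inv': "continuous_map \<sigma>' \<sigma>' (\<lambda>x. inv\<^bsub>H'\<^esub> x)"
    by (rule continuous_map_eq) (auto simp: ts g_in fg)
  have "\<sigma> homeomorphic_space \<sigma>'"
    using hom homeomorphic_space_def by blast
  then have "Hausdorff_space \<sigma>'" "locally_compact_space \<sigma>'"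
    using H homeomorphic_Hausdorff_space homeomorphic_locally_compact_space
    by (auto simp: lc_group_def)
  then show ?thesis
    using H' ts mult' inv' by (simp add: lc_group_def topological_group_def)
qed

section \<open>Locally compact completions\<close>

lemma lc_completionD:
  assumes "lc_completion G \<tau> H \<sigma> \<eta>"
  shows "lc_group H \<sigma>" "group H" "topspace \<sigma> = carrier H" "\<eta> \<in> hom G H"
    "continuous_map \<tau> \<sigma> \<eta>" "\<sigma> closure_of (\<eta> ` carrier G) = carrier H"
    "\<tau> = pullback_topology (carrier G) \<eta> \<sigma>" "topspace \<tau> = carrier G"
    "\<And>x. x \<in> carrier G \<Longrightarrow> \<eta> x \<in> carrier H"
proof -
  show "lc_group H \<sigma>" "group H" "topspace \<sigma> = carrier H" "\<eta> \<in> hom G H"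
    "continuous_map \<tau> \<sigma> \<eta>" "\<sigma> closure_of (\<eta> ` carrier G) = carrier H"
    and pb: "\<tau> = pullback_topology (carrier G) \<eta> \<sigma>"
    and in_H: "\<And>x. x \<in> carrier G \<Longrightarrow> \<eta> x \<in> carrier H"
    using assms by (auto simp: lc_completion_def lc_group_def topological_group_def hom_def)
  show "topspace \<tau> = carrier G"
    using \<open>topspace \<sigma> = carrier H\<close> in_H by (subst pb) (auto simp: topspace_pullback_topology)
qed

lemma topological_group_lc_completion:
  assumes "group G" "lc_completion G \<tau> H \<sigma> \<eta>"
  shows "topological_group G \<tau>"
proof -
  have "topological_group H \<sigma>"
    using lc_completionD(1)[OF assms(2)] by (simp add: lc_group_def)
  then show ?thesis
    using topological_group_pullback_topology[OF assms(1) _ lc_completionD(4)[OF assms(2)]]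
      lc_completionD(7)[OF assms(2)] by simp
qed

lemma lc_completion_iso_homeomorphic:
  assumes C: "lc_completion G \<tau> H \<sigma> \<eta>" and H': "group H'" and iso: "f \<in> iso H H'"
    and hom: "homeomorphic_maps \<sigma> \<sigma>' f g"
  shows "lc_completion G \<tau> H' \<sigma>' (f \<circ> \<eta>)"
proof -
  note L = lc_completionD[OF C]
  have f: "homeomorphic_map \<sigma> \<sigma>' f"
    using hom homeomorphic_maps_imp_map by blast
  have \<eta>_img: "\<eta> ` carrier G \<subseteq> topspace \<sigma>"
    using L(3,9) by auto
  then have "\<sigma>' closure_of ((f \<circ> \<eta>) ` carrier G) = f ` carrier H"
    using homeomorphic_map_closure_of[OF f] L(6) by (metis image_comp)
  moreover have "f ` carrier H = carrier H'"
    using iso by (simp add: iso_def bij_betw_def)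
  moreover have "pullback_topology (carrier G) (f \<circ> \<eta>) \<sigma>' = \<tau>"
    using pullback_topology_homeomorphic[OF hom \<eta>_img] L(7) by simp
  ultimately show ?thesis
    using lc_group_iso_homeomorphic[OF L(1) H' iso hom] L(4,5) iso
      continuous_map_compose[OF L(5) homeomorphic_imp_continuous_map[OF f]]
    by (auto simp: lc_completion_def iso_def intro: hom_compose)
qed

lemma homeomorphic_maps_pullback_inv_into:
  assumes inj: "inj_on f (topspace X)"
  defines "g \<equiv> inv_into (topspace X) f"
  shows "homeomorphic_maps X (pullback_topology (f ` topspace X) g X) f g"
proof -
  have gf: "g (f x) = x" if "x \<in> topspace X" for x
    using inj that by (simp add: g_def)
  have ts: "topspace (pullback_topology (f ` topspace X) g X) = f ` topspace X"
    using gf by (auto simp: topspace_pullback_topology)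
  have "continuous_map X X (g \<circ> f)"
    by (rule continuous_map_eq[OF continuous_map_id]) (simp add: gf)
  then have "continuous_map X (pullback_topology (f ` topspace X) g X) f"
    by (simp add: continuous_map_into_pullback_topology_iff)
  then show ?thesis
    unfolding homeomorphic_maps_def
    using continuous_map_pullback_topology gf ts by (auto simp: g_def f_inv_into_f)
qed

lemma inj_on_neighbourhood_traces:
  assumes haus: "Hausdorff_space X" and dense: "X closure_of (\<eta> ` A) = topspace X"
  shows "inj_on (\<lambda>x. {\<eta> -` U \<inter> A | U. openin X U \<and> x \<in> U}) (topspace X)"
proof (rule inj_onI, rule ccontr)
  fix x y assume x: "x \<in> topspace X" and y: "y \<in> topspace X" and "x \<noteq> y"
    and eq: "{\<eta> -` U \<inter> A | U. openin X U \<and> x \<in> U} = {\<eta> -` U \<inter> A | U. openin X U \<and> y \<in> U}"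
  then obtain U V where UV: "openin X U" "openin X V" "x \<in> U" "y \<in> V" "disjnt U V"
    using haus unfolding Hausdorff_space_def by metis
  then have "\<eta> -` U \<inter> A \<in> {\<eta> -` U \<inter> A | U. openin X U \<and> y \<in> U}"
    unfolding eq[symmetric] by blast
  then obtain W where W: "openin X W" "y \<in> W" "\<eta> -` U \<inter> A = \<eta> -` W \<inter> A"
    by blast
  have "y \<in> X closure_of (\<eta> ` A)"
    using dense y by simp
  moreover have "openin X (W \<inter> V)" "y \<in> W \<inter> V"
    using W UV by auto
  ultimately obtain a where a: "a \<in> A" "\<eta> a \<in> W \<inter> V"
    unfolding in_closure_of by blast
  then have "\<eta> a \<in> U"
    using W(3) by blast
  then show False
    using a UV(5) by (auto simp: disjnt_def)
qed

lemma lc_completion_set_set: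
  fixes G :: "('a, 'm) monoid_scheme"
  assumes C: "lc_completion G \<tau> H \<sigma> \<eta>"
  obtains H' :: "'a set set monoid" and \<sigma>' \<eta>'
  where "lc_completion G \<tau> H' \<sigma>' \<eta>'"
    and "totally_disconnected_space \<sigma>' \<longleftrightarrow> totally_disconnected_space \<sigma>"
proof -
  note L = lc_completionD[OF C]
  define f where "f x = {\<eta> -` U \<inter> carrier G | U. openin \<sigma> U \<and> x \<in> U}" for x
  have inj: "inj_on f (topspace \<sigma>)"
    unfolding f_def using L(1,3,6)
    by (intro inj_on_neighbourhood_traces) (simp_all add: lc_group_def)
  define \<sigma>' where "\<sigma>' = pullback_topology (f ` topspace \<sigma>) (inv_into (topspace \<sigma>) f) \<sigma>"
  have hom: "homeomorphic_maps \<sigma> \<sigma>' f (inv_into (topspace \<sigma>) f)"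
    unfolding \<sigma>'_def by (rule homeomorphic_maps_pullback_inv_into[OF inj])
  have "f \<in> iso H (image_group f H)" "group (image_group f H)"
    using inj L(3) inj_imp_image_group_iso group.inj_imp_image_group_is_group[OF L(2)] by simp_all
  then have "lc_completion G \<tau> (image_group f H) \<sigma>' (f \<circ> \<eta>)"
    using lc_completion_iso_homeomorphic[OF C _ _ hom] by blast
  moreover have "\<sigma> homeomorphic_space \<sigma>'"
    using hom homeomorphic_space_def by blast
  ultimately show ?thesis
    using that homeomorphic_totally_disconnected_space by blast
qed

lemma lc_completion_completion_of:
  fixes G :: "('a, 'm) monoid_scheme"
  assumes "lc_completion G \<tau> (H :: 'a set set monoid) \<sigma> \<eta>" and "completion_of G \<tau> = (H', \<sigma>', \<eta>')"
  shows "lc_completion G \<tau> H' \<sigma>' \<eta>'"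
proof -
  have "(\<lambda>(H, \<sigma>, \<eta>). lc_completion G \<tau> H \<sigma> \<eta>) (completion_of G \<tau>)"
    using someI[of "\<lambda>(H, \<sigma>, \<eta>). lc_completion G \<tau> H \<sigma> \<eta>" "(H, \<sigma>, \<eta>)"] assms(1)
    by (simp add: completion_of_def)
  then show ?thesis
    using assms(2) by simp
qed

lemma tjoin_eq_pullback_topology:
  assumes C1: "lc_completion G \<tau>1 H1 \<sigma>1 \<eta>1" and C2: "lc_completion G \<tau>2 H2 \<sigma>2 \<eta>2"
  shows "tjoin G \<tau>1 \<tau>2 = pullback_topology (carrier G) (\<lambda>s. (\<eta>1 s, \<eta>2 s)) (prod_topology \<sigma>1 \<sigma>2)"
proof -
  obtain K1 \<rho>1 \<theta>1 where K1: "completion_of G \<tau>1 = (K1, \<rho>1, \<theta>1)"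
    by (cases "completion_of G \<tau>1") auto
  obtain K2 \<rho>2 \<theta>2 where K2: "completion_of G \<tau>2 = (K2, \<rho>2, \<theta>2)"
    by (cases "completion_of G \<tau>2") auto
  obtain H1' :: "'a set set monoid" and \<sigma>1' \<eta>1' where "lc_completion G \<tau>1 H1' \<sigma>1' \<eta>1'"
    using lc_completion_set_set[OF C1] by blast
  then have "lc_completion G \<tau>1 K1 \<rho>1 \<theta>1"
    using lc_completion_completion_of K1 by blast
  then have 1: "pullback_topology (carrier G) \<theta>1 \<rho>1 = pullback_topology (carrier G) \<eta>1 \<sigma>1"
    using lc_completionD(7) C1 by metis
  obtain H2' :: "'a set set monoid" and \<sigma>2' \<eta>2' where "lc_completion G \<tau>2 H2' \<sigma>2' \<eta>2'"
    using lc_completion_set_set[OF C2] by blast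
  then have "lc_completion G \<tau>2 K2 \<rho>2 \<theta>2"
    using lc_completion_completion_of K2 by blast
  then have 2: "pullback_topology (carrier G) \<theta>2 \<rho>2 = pullback_topology (carrier G) \<eta>2 \<sigma>2"
    using lc_completionD(7) C2 by metis
  show ?thesis
    unfolding tjoin_def K1 K2 using pullback_topology_pair_cong[OF 1 2] by simp
qed

lemma T_tdI:
  assumes G: "group G" and coarser: "\<And>U. openin \<tau> U \<Longrightarrow> openin T U"
    and C: "lc_completion G \<tau> H \<sigma> \<eta>" and td: "totally_disconnected_space \<sigma>"
  shows "\<tau> \<in> T_td G T"
proof -
  obtain H' :: "'a set set monoid" and \<sigma>' \<eta>'
    where "lc_completion G \<tau> H' \<sigma>' \<eta>'" "totally_disconnected_space \<sigma>'"
    using lc_completion_set_set[OF C] td by blast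
  then show ?thesis
    using coarser topological_group_lc_completion[OF G C]
    unfolding T_td_def T_set_def coarser_group_topology_def by blast
qed

lemma T_td_coarser:
  "\<tau> \<in> T_td G T \<Longrightarrow> openin \<tau> U \<Longrightarrow> openin T U"
  by (simp add: T_td_def T_set_def coarser_group_topology_def)

lemma continuous_map_id_T_td:
  assumes "topological_group G T" "\<tau> \<in> T_td G T"
  shows "continuous_map T \<tau> id"
proof -
  have "topspace \<tau> = topspace T"
    using assms by (simp add: T_td_def T_set_def coarser_group_topology_def topological_group_def)
  then show ?thesis
    using topology_finer_continuous_id[of \<tau> T] T_td_coarser[OF assms(2)] by simp
qed

lemma lc_completion_comp_surj:
  assumes C: "lc_completion Q \<tau> K \<rho> \<theta>" and q: "q \<in> hom G Q" "q ` carrier G = carrier Q"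
  shows "lc_completion G (pullback_topology (carrier G) q \<tau>) K \<rho> (\<theta> \<circ> q)"
proof -
  note L = lc_completionD[OF C]
  have pb: "pullback_topology (carrier G) q \<tau> = pullback_topology (carrier G) (\<theta> \<circ> q) \<rho>"
    using L(7) pullback_topology_compose[of q "carrier G" "carrier Q"] q(2) by simp
  have "(\<theta> \<circ> q) ` carrier G = \<theta> ` carrier Q"
    using q(2) by (metis image_comp)
  then show ?thesis
    using L(1,6) hom_compose[OF q(1) L(4)]
    by (simp add: lc_completion_def pb continuous_map_pullback_topology)
qed

lemma lc_completion_factor:
  assumes C: "lc_completion G \<tau> H \<sigma> \<eta>" and q: "q ` carrier G = carrier Q"
    and \<eta>': "\<eta>' \<in> hom Q H" "\<And>x. x \<in> carrier G \<Longrightarrow> \<eta>' (q x) = \<eta> x"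
  shows "lc_completion Q (quotient_topology \<tau> q (carrier Q)) H \<sigma> \<eta>'"
proof -
  note L = lc_completionD[OF C]
  have in_H: "\<eta>' ` carrier Q \<subseteq> topspace \<sigma>"
    using \<eta>' L(3) by (auto simp: hom_def)
  have img: "\<eta>' ` carrier Q = \<eta> ` carrier G"
    unfolding q[symmetric] image_image by (rule image_cong) (simp_all add: \<eta>'(2))
  have "\<tau> = pullback_topology (carrier G) (\<eta>' \<circ> q) \<sigma>"
    unfolding L(7) by (rule pullback_topology_cong) (simp add: \<eta>'(2))
  also have "\<dots> = pullback_topology (carrier G) q (pullback_topology (carrier Q) \<eta>' \<sigma>)"
    using q by (intro pullback_topology_compose[symmetric]) simp
  finally have "\<tau> = pullback_topology (carrier G) q (pullback_topology (carrier Q) \<eta>' \<sigma>)" .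
  moreover have "topspace (pullback_topology (carrier Q) \<eta>' \<sigma>) = carrier Q"
    using in_H by (auto simp: topspace_pullback_topology)
  ultimately have "quotient_topology \<tau> q (carrier Q) = pullback_topology (carrier Q) \<eta>' \<sigma>"
    using quotient_topology_pullback_topology[OF q] by simp
  then show ?thesis
    using L \<eta>'(1) img continuous_map_pullback_topology[of "carrier Q" \<eta>' \<sigma>]
    by (simp add: lc_completion_def)
qed

lemma connected_subset_kernel_lc_completion:
  assumes td: "\<tau> \<in> T_td G T" and C: "lc_completion G \<tau> H \<sigma> \<eta>"
    and conn: "connectedin \<tau> S" and one: "\<one>\<^bsub>G\<^esub> \<in> S"
  shows "S \<subseteq> kernel G H \<eta>"
proof -
  obtain H0 :: "'a set set monoid" and \<sigma>0 \<eta>0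
    where C0: "lc_completion G \<tau> H0 \<sigma>0 \<eta>0" and td0: "totally_disconnected_space \<sigma>0"
    using td unfolding T_td_def by blast
  note L0 = lc_completionD[OF C0] and L = lc_completionD[OF C]
  have G: "group G"
    using td by (simp add: T_td_def T_set_def coarser_group_topology_def topological_group_def)
  have "group_hom G H0 \<eta>0" "group_hom G H \<eta>"
    using G L0(2,4) L(2,4) by (simp_all add: group_hom_def group_hom_axioms_def)
  then have hom_one: "\<eta>0 \<one>\<^bsub>G\<^esub> = \<one>\<^bsub>H0\<^esub>" "\<eta> \<one>\<^bsub>G\<^esub> = \<one>\<^bsub>H\<^esub>"
    by (simp_all add: group_hom.hom_one)
  have S_sub: "S \<subseteq> carrier G"
    using conn L(8) connectedin_subset_topspace by blast
  have "\<eta>0 ` S \<subseteq> connected_component_of_set \<sigma>0 \<one>\<^bsub>H0\<^esub>"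
    using connectedin_continuous_map_image[OF L0(5) conn] one hom_one
    by (metis connected_component_of_maximal imageI)
  also have "\<dots> = {\<one>\<^bsub>H0\<^esub>}"
    using td0 L0(3) monoid.one_closed[OF group.is_monoid[OF L0(2)]] by (simp add: totally_disconnected_space_def)
  finally have "\<eta>0 x = \<eta>0 \<one>\<^bsub>G\<^esub>" if "x \<in> S" for x
    using that hom_one by auto
  moreover have "pullback_topology (carrier G) \<eta>0 \<sigma>0 = pullback_topology (carrier G) \<eta> \<sigma>"
    using L0(7) L(7) by simp
  moreover have "t1_space \<sigma>"
    using L(1) by (simp add: lc_group_def Hausdorff_imp_t1_space)
  ultimately have "\<eta> x = \<eta> \<one>\<^bsub>G\<^esub>" if "x \<in> S" for x
    using that S_sub monoid.one_closed[OF group.is_monoid[OF G]] L(3,9)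
    by (intro pullback_topology_eq_fibres[of "carrier G" \<eta>0 \<sigma>0 \<eta> \<sigma>]) auto
  then show ?thesis
    using S_sub hom_one by (auto simp: kernel_def)
qed

section \<open>The quotient by the identity component\<close>

locale identity_component_quotient =
  fixes G :: "('a, 'm) monoid_scheme" and T :: "'a topology"
    and Ge :: "'a set" and q :: "'a \<Rightarrow> 'a set" and Q :: "'a set monoid" and TQ :: "'a set topology"
  assumes lc_group: "lc_group G T"
    and Ge_def: "Ge = connected_component_of_set T \<one>\<^bsub>G\<^esub>"
    and q_def: "q = (\<lambda>x. Ge #>\<^bsub>G\<^esub> x)"
    and Q_def: "Q = G Mod Ge"
    and TQ_def: "TQ = quotient_topology T q (carrier Q)"
begin

lemma topological_group: "topological_group G T"
  using lc_group by (simp add: lc_group_def)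

lemma group_G: "group G"
  using topological_group by (simp add: topological_group_def)

lemma topspace_T: "topspace T = carrier G"
  using topological_group by (simp add: topological_group_def)

lemma normal_Ge: "Ge \<lhd> G"
  unfolding Ge_def by (rule normal_connected_component_one[OF topological_group])

lemma group_Q: "group Q"
  unfolding Q_def by (rule normal.factorgroup_is_group[OF normal_Ge])

lemma q_hom: "q \<in> hom G Q"
  unfolding Q_def q_def by (rule normal.r_coset_hom_Mod[OF normal_Ge])

lemma q_image: "q ` carrier G = carrier Q"
  unfolding Q_def q_def by (rule carrier_FactGroup[symmetric])

lemma q_in_carrier: "x \<in> carrier G \<Longrightarrow> q x \<in> carrier Q"
  using q_image by blast

lemma Ge_subset_kernel:
  assumes "\<tau> \<in> T_td G T" "lc_completion G \<tau> H \<sigma> \<eta>"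
  shows "Ge \<subseteq> kernel G H \<eta>"
proof (rule connected_subset_kernel_lc_completion[OF assms])
  show "connectedin \<tau> Ge"
    unfolding Ge_def
    using connectedin_continuous_map_image[OF continuous_map_id_T_td[OF topological_group assms(1)]
        connectedin_connected_component_of]
    by simp
  show "\<one>\<^bsub>G\<^esub> \<in> Ge"
    unfolding Ge_def using topspace_T monoid.one_closed[OF group.is_monoid[OF group_G]]
    by (simp add: connected_component_of_refl)
qed

lemma lc_completion_descends:
  assumes td: "\<tau> \<in> T_td G T" and C: "lc_completion G \<tau> H \<sigma> \<eta>"
  obtains \<eta>' where "\<forall>x\<in>carrier G. \<eta>' (q x) = \<eta> x"
    and "lc_completion Q (quotient_topology \<tau> q (carrier Q)) H \<sigma> \<eta>'"
proof -
  note L = lc_completionD[OF C]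
  define \<eta>' where "\<eta>' X = the_elem (\<eta> ` X)" for X
  have ker: "Ge \<subseteq> kernel G H \<eta>"
    by (rule Ge_subset_kernel[OF td C])
  have hom: "\<eta>' \<in> hom Q H"
    unfolding \<eta>'_def Q_def by (rule the_elem_image_hom_Mod[OF normal_Ge L(2,4) ker])
  have factor: "\<eta>' (q x) = \<eta> x" if "x \<in> carrier G" for x
    unfolding \<eta>'_def q_def by (rule the_elem_image_r_coset[OF normal_Ge L(2,4) ker that])
  show ?thesis
    using that factor lc_completion_factor[OF C q_image hom factor] by blast
qed

lemma continuous_map_TQ:
  assumes td: "\<tau> \<in> T_td G T" and C: "lc_completion G \<tau> H \<sigma> \<eta>"
    and factor: "\<forall>x\<in>carrier G. \<eta>' (q x) = \<eta> x" and "\<eta>' \<in> carrier Q \<rightarrow> topspace \<sigma>"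
  shows "continuous_map TQ \<sigma> \<eta>'"
proof -
  have "continuous_map T \<sigma> (\<eta> \<circ> id)"
    using continuous_map_compose[OF continuous_map_id_T_td[OF topological_group td]
        lc_completionD(5)[OF C]] .
  then have "continuous_map T \<sigma> (\<eta>' \<circ> q)"
    by (rule continuous_map_eq) (simp add: factor topspace_T)
  moreover have "q \<in> topspace T \<rightarrow> carrier Q"
    by (simp add: topspace_T q_in_carrier)
  ultimately show ?thesis
    unfolding TQ_def using assms(4) by (rule continuous_map_from_quotient_topology)
qed

lemma quotient_topology_in_T_td:
  assumes td: "\<tau> \<in> T_td G T"
  shows "quotient_topology \<tau> q (carrier Q) \<in> T_td Q TQ"
proof -
  obtain H :: "'a set set monoid" and \<sigma> \<eta>
    where C: "lc_completion G \<tau> H \<sigma> \<eta>" and td\<sigma>: "totally_disconnected_space \<sigma>"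
    using td unfolding T_td_def by blast
  have coarser: "openin TQ U" if "openin (quotient_topology \<tau> q (carrier Q)) U" for U
    unfolding TQ_def using quotient_topology_mono[OF T_td_coarser[OF td] _ that]
      lc_completionD(8)[OF C] topspace_T by simp
  obtain \<eta>' where "lc_completion Q (quotient_topology \<tau> q (carrier Q)) H \<sigma> \<eta>'"
    using lc_completion_descends[OF td C] .
  from T_tdI[OF group_Q coarser this td\<sigma>] show ?thesis .
qed

lemma pullback_quotient_topology:
  assumes td: "\<tau> \<in> T_td G T"
  shows "pullback_topology (carrier G) q (quotient_topology \<tau> q (carrier Q)) = \<tau>"
proof -
  obtain H :: "'a set set monoid" and \<sigma> \<eta> where C: "lc_completion G \<tau> H \<sigma> \<eta>"
    using td unfolding T_td_def by blast
  obtain \<eta>' where factor: "\<forall>x\<in>carrier G. \<eta>' (q x) = \<eta> x"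
    and C': "lc_completion Q (quotient_topology \<tau> q (carrier Q)) H \<sigma> \<eta>'"
    using lc_completion_descends[OF td C] .
  have "pullback_topology (carrier G) q (quotient_topology \<tau> q (carrier Q))
      = pullback_topology (carrier G) q (pullback_topology (carrier Q) \<eta>' \<sigma>)"
    using lc_completionD(7)[OF C'] by simp
  also have "\<dots> = pullback_topology (carrier G) (\<eta>' \<circ> q) \<sigma>"
    using q_image by (intro pullback_topology_compose) simp
  also have "\<dots> = pullback_topology (carrier G) \<eta> \<sigma>"
    using factor by (intro pullback_topology_cong) simp
  finally show ?thesis
    using lc_completionD(7)[OF C] by simp
qed

lemma pullback_topology_in_T_td:
  assumes td: "\<tau>' \<in> T_td Q TQ"
  shows "pullback_topology (carrier G) q \<tau>' \<in> T_td G T"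
proof -
  obtain K :: "'a set set set monoid" and \<rho> \<theta>
    where C: "lc_completion Q \<tau>' K \<rho> \<theta>" and td\<rho>: "totally_disconnected_space \<rho>"
    using td unfolding T_td_def by blast
  have coarser: "openin T S" if S: "openin (pullback_topology (carrier G) q \<tau>') S" for S
  proof -
    have "\<exists>V. openin \<tau>' V \<and> S = q -` V \<inter> carrier G"
      using S by (simp only: openin_pullback_topology)
    then obtain V where V: "openin \<tau>' V" "S = q -` V \<inter> carrier G"
      by (elim exE conjE)
    then have "openin TQ V"
      by (intro T_td_coarser[OF td])
    then have "openin T {x \<in> topspace T. q x \<in> V}"
      unfolding TQ_def openin_quotient_topology by (elim conjE)
    moreover have "{x \<in> topspace T. q x \<in> V} = S"
      unfolding V(2) topspace_T by auto
    ultimately show ?thesis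
      by (simp only:)
  qed
  show ?thesis
    by (rule T_tdI[OF group_G coarser lc_completion_comp_surj[OF C q_hom q_image] td\<rho>])
qed

lemma quotient_pullback_topology:
  assumes "\<tau>' \<in> T_td Q TQ"
  shows "quotient_topology (pullback_topology (carrier G) q \<tau>') q (carrier Q) = \<tau>'"
proof -
  obtain K :: "'a set set set monoid" and \<rho> \<theta> where C: "lc_completion Q \<tau>' K \<rho> \<theta>"
    using assms unfolding T_td_def by blast
  show ?thesis
    by (rule quotient_topology_pullback_topology[OF q_image lc_completionD(8)[OF C]])
qed

lemma quotient_topology_tjoin:
  assumes td1: "\<tau>1 \<in> T_td G T" and td2: "\<tau>2 \<in> T_td G T"
  shows "quotient_topology (tjoin G \<tau>1 \<tau>2) q (carrier Q) =
    tjoin Q (quotient_topology \<tau>1 q (carrier Q)) (quotient_topology \<tau>2 q (carrier Q))"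
proof -
  obtain H1 :: "'a set set monoid" and \<sigma>1 \<eta>1 where C1: "lc_completion G \<tau>1 H1 \<sigma>1 \<eta>1"
    using td1 unfolding T_td_def by blast
  obtain H2 :: "'a set set monoid" and \<sigma>2 \<eta>2 where C2: "lc_completion G \<tau>2 H2 \<sigma>2 \<eta>2"
    using td2 unfolding T_td_def by blast
  obtain \<eta>1' where D1: "\<forall>x\<in>carrier G. \<eta>1' (q x) = \<eta>1 x"
    "lc_completion Q (quotient_topology \<tau>1 q (carrier Q)) H1 \<sigma>1 \<eta>1'"
    using lc_completion_descends[OF td1 C1] .
  obtain \<eta>2' where D2: "\<forall>x\<in>carrier G. \<eta>2' (q x) = \<eta>2 x"
    "lc_completion Q (quotient_topology \<tau>2 q (carrier Q)) H2 \<sigma>2 \<eta>2'"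
    using lc_completion_descends[OF td2 C2] .
  define X where "X = pullback_topology (carrier Q) (\<lambda>C. (\<eta>1' C, \<eta>2' C)) (prod_topology \<sigma>1 \<sigma>2)"
  have "tjoin G \<tau>1 \<tau>2 = pullback_topology (carrier G) (\<lambda>s. (\<eta>1 s, \<eta>2 s)) (prod_topology \<sigma>1 \<sigma>2)"
    by (rule tjoin_eq_pullback_topology[OF C1 C2])
  also have "\<dots> = pullback_topology (carrier G) ((\<lambda>C. (\<eta>1' C, \<eta>2' C)) \<circ> q) (prod_topology \<sigma>1 \<sigma>2)"
    using D1(1) D2(1) by (intro pullback_topology_cong) simp
  also have "\<dots> = pullback_topology (carrier G) q X"
    unfolding X_def using q_image by (intro pullback_topology_compose[symmetric]) simp
  finally have "tjoin G \<tau>1 \<tau>2 = pullback_topology (carrier G) q X" .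
  moreover have "topspace X = carrier Q"
    using lc_completionD(3,9)[OF D1(2)] lc_completionD(3,9)[OF D2(2)]
    by (auto simp: X_def topspace_pullback_topology topspace_prod_topology)
  moreover have "X = tjoin Q (quotient_topology \<tau>1 q (carrier Q)) (quotient_topology \<tau>2 q (carrier Q))"
    unfolding X_def by (rule tjoin_eq_pullback_topology[OF D1(2) D2(2), symmetric])
  ultimately show ?thesis
    using quotient_topology_pullback_topology[OF q_image] by simp
qed


lemma bij_betw_quotient_topology_T_td:
  "bij_betw (\<lambda>\<tau>. quotient_topology \<tau> q (carrier Q)) (T_td G T) (T_td Q TQ)"
  by (rule bij_betw_byWitness[where f' = "pullback_topology (carrier G) q"])
    (auto simp: pullback_quotient_topology quotient_pullback_topology
      quotient_topology_in_T_td pullback_topology_in_T_td)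

lemma lc_completion_factors_through_quotient:
  assumes td: "\<tau> \<in> T_td G T" and C: "lc_completion G \<tau> H \<sigma> \<eta>"
  shows "Ge \<subseteq> kernel G H \<eta> \<and>
    (\<exists>\<eta>'. \<eta>' \<in> hom Q H \<and> continuous_map TQ \<sigma> \<eta>' \<and> (\<forall>x\<in>carrier G. \<eta>' (q x) = \<eta> x) \<and>
       (\<forall>\<eta>''. \<eta>'' \<in> hom Q H \<and> continuous_map TQ \<sigma> \<eta>'' \<and> (\<forall>x\<in>carrier G. \<eta>'' (q x) = \<eta> x)
           \<longrightarrow> (\<forall>y\<in>carrier Q. \<eta>'' y = \<eta>' y)) \<and>
       quotient_topology \<tau> q (carrier Q) = pullback_topology (carrier Q) \<eta>' \<sigma> \<and>
       lc_completion Q (quotient_topology \<tau> q (carrier Q)) H \<sigma> \<eta>')"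
proof -
  obtain \<eta>' where factor: "\<forall>x\<in>carrier G. \<eta>' (q x) = \<eta> x"
    and C': "lc_completion Q (quotient_topology \<tau> q (carrier Q)) H \<sigma> \<eta>'"
    using lc_completion_descends[OF td C] .
  note L' = lc_completionD[OF C']
  have "continuous_map TQ \<sigma> \<eta>'"
    using L'(3,9) by (intro continuous_map_TQ[OF td C factor]) auto
  moreover have "\<eta>'' y = \<eta>' y"
    if factor'': "\<forall>x\<in>carrier G. \<eta>'' (q x) = \<eta> x" and y: "y \<in> carrier Q" for \<eta>'' y
  proof -
    obtain x where "x \<in> carrier G" "y = q x"
      using y q_image by blast
    then show ?thesis
      using factor'' factor by simp
  qed
  ultimately show ?thesis
    using Ge_subset_kernel[OF td C] factor C' L'(4,7) by blast
qed
end

theorem proposition2p1: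
  fixes G :: "('a, 'm) monoid_scheme" and T :: "'a topology"
  defines "Ge \<equiv> connected_component_of_set T \<one>\<^bsub>G\<^esub>"
  defines "q \<equiv> (\<lambda>x. Ge #>\<^bsub>G\<^esub> x)"
  defines "Q \<equiv> G Mod Ge"
  defines "TQ \<equiv> quotient_topology T q (carrier Q)"
  assumes "lc_group G T"
  shows "\<exists>\<phi>. bij_betw \<phi> (T_td G T) (T_td Q TQ)
    \<and> (\<forall>\<tau>1\<in>T_td G T. \<forall>\<tau>2\<in>T_td G T. \<phi> (tjoin G \<tau>1 \<tau>2) = tjoin Q (\<phi> \<tau>1) (\<phi> \<tau>2))
    \<and> (\<forall>\<tau>\<in>T_td G T. \<forall>(H :: ('c, 'n) monoid_scheme) \<sigma> \<eta>. lc_completion G \<tau> H \<sigma> \<eta> \<longrightarrow>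
         Ge \<subseteq> kernel G H \<eta> \<and>
         (\<exists>\<eta>'. \<eta>' \<in> hom Q H \<and> continuous_map TQ \<sigma> \<eta>' \<and> (\<forall>x\<in>carrier G. \<eta>' (q x) = \<eta> x) \<and>
            (\<forall>\<eta>''. \<eta>'' \<in> hom Q H \<and> continuous_map TQ \<sigma> \<eta>'' \<and> (\<forall>x\<in>carrier G. \<eta>'' (q x) = \<eta> x)
                \<longrightarrow> (\<forall>y\<in>carrier Q. \<eta>'' y = \<eta>' y)) \<and>
            \<phi> \<tau> = pullback_topology (carrier Q) \<eta>' \<sigma> \<and>
            lc_completion Q (\<phi> \<tau>) H \<sigma> \<eta>'))"
proof -
  interpret identity_component_quotient G T Ge q Q TQ
    using assms(5) by unfold_locales (simp_all add: Ge_def q_def Q_def TQ_def)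
  show ?thesis
    using bij_betw_quotient_topology_T_td quotient_topology_tjoin
      lc_completion_factors_through_quotient
    by (intro exI[of _ "\<lambda>\<tau>. quotient_topology \<tau> q (carrier Q)"]) blast
qed

end
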